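(* Let $a>0$ satisfy $p(e^a-1) < \frac{q_I}{2}(1-e^{-a})$ and define $\Phi([x_1,\dots,x_I]) = \sum_{i=1}^I e^{a x_i}$. Then there exists $b>0$ such that, for the controlled queue-length vector $X_t = [X^1_t,\dots,X^I_t]$ and $\theta := [0,\dots,0]$, $$\mathbb{E}\left[\Phi(X_{t+1}) - \Phi(X_t)\,\middle|\, X_t\right] \le -b\,\Phi(X_t) \quad \text{whenever } X_t \neq \theta,$$ and this holds regardless of the choice of the admissible controls $\{\nu^i_t\}$.
   Context: Processor sharing model: a single Bernoulli arrival process $\{\xi_t\}$ ($\xi_t\in\{0,1\}$ i.i.d., $P(\xi_t=1)=p\in(0,1)$). There are $I$ queues (servers) with queue lengths $X^i_t\in\{0,1,2,\dots\}$ evolving as $X^i_{t+1} = X^i_t - D^i_{t+1} + \nu^i_t \xi_{t+1}$, where $\nu^i_t\in\{0,1\}$ is a control ($1$ = active: arrivals admitted to queue $i$; $0$ = passive) with $\sum_i \nu^i_t = 1$ for all $t$, and the controls are admissible, i.e. $\nu_t$ is conditionally independent of future departures and arrivals given the past history. Departures follow egalitarian processor sharing: server $i$ has capacity $q_i$; given $X^i_t = x\ge 1$, $D^i_{t+1}\sim \mathrm{Binomial}(x, q_i/x)$, i.e. $P(d \text{ departures}) = \binom{x}{d}(q_i/x)^d(1-q_i/x)^{x-d}$; if $x=0$ there are no departures. Standing assumption: $1>q_1>q_2>\dots>q_I>2p>0$. *)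

theory Defs
  imports "HOL-Probability.Probability"
begin

text \<open>Queues are indexed by 0..<I (paper: 1..I); capacities q :: nat => real.
  A state is x :: nat => nat, only the coordinates i < I are relevant.\<close>

text \<open>Departures from a queue of capacity qi holding x jobs (egalitarian processor sharing).\<close>
definition dep_pmf :: "real \<Rightarrow> nat \<Rightarrow> nat pmf" where
  "dep_pmf qi x = (if x = 0 then return_pmf 0 else binomial_pmf x (qi / real x))"

definition valid_control :: "nat \<Rightarrow> (nat \<Rightarrow> nat) \<Rightarrow> bool" where
  "valid_control I \<nu> \<longleftrightarrow> (\<forall>i<I. \<nu> i \<in> {0,1}) \<and> (\<Sum>i<I. \<nu> i) = 1"

definition next_pmf :: "real \<Rightarrow> (nat \<Rightarrow> real) \<Rightarrow> nat \<Rightarrow> (nat \<Rightarrow> nat) \<Rightarrow> (nat \<Rightarrow> nat) \<Rightarrow> (nat \<Rightarrow> nat) pmf" where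
  "next_pmf p q I x \<nu> =
     map_pmf (\<lambda>(D, \<xi>). \<lambda>i. if i < I then x i - D i + (if \<xi> then \<nu> i else 0) else 0)
       (pair_pmf (Pi_pmf {..<I} 0 (\<lambda>i. dep_pmf (q i) (x i))) (bernoulli_pmf p))"

text \<open>One step under a (possibly randomized) admissible control: the control is drawn from
  mu (its conditional law given the past), independently of the future departures/arrivals.\<close>
definition step_pmf :: "real \<Rightarrow> (nat \<Rightarrow> real) \<Rightarrow> nat \<Rightarrow> (nat \<Rightarrow> nat) \<Rightarrow> (nat \<Rightarrow> nat) pmf \<Rightarrow> (nat \<Rightarrow> nat) pmf" where
  "step_pmf p q I x \<mu> = bind_pmf \<mu> (\<lambda>\<nu>. next_pmf p q I x \<nu>)"

definition Phi :: "real \<Rightarrow> nat \<Rightarrow> (nat \<Rightarrow> nat) \<Rightarrow> real" where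
  "Phi a I x = (\<Sum>i<I. exp (a * real (x i)))"

end

theory Submission
  imports Defs
begin

(*
  Under an admissible control at most one queue receives the Bernoulli(p) arrival, which raises
  Phi by at most p (e^a - 1) e^(a x_j) in expectation. Every nonempty queue i loses a job with
  probability 1 - (1 - q_i/x_i)^x_i >= 1 - e^(-q_i) >= q_i/2, which lowers Phi by at least
  (q_I/2)(1 - e^(-a)) e^(a x_i). Both effects are compared with the weight W of the nonempty
  queues, W = sum of e^(a x_i) over x_i > 0: when some queue is nonempty, W dominates every single
  term e^(a x_i), hence also Phi/I. So the drift is at most -eps W <= -(eps/I) Phi, where eps > 0
  is the gap in the hypothesis on a; a randomised control only averages such bounds.
*)

lemma exp_minus_le_one_minus_half:
  fixes c :: real
  assumes "0 \<le> c" "c \<le> 1"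
  shows "exp (- c) \<le> 1 - c / 2"
proof -
  have "exp (- c) \<le> 1 / (1 + c)"
    using exp_ge_add_one_self[of c] assms by (simp add: exp_minus field_simps)
  also have "\<dots> \<le> 1 - c / 2"
  proof -
    have "1 \<le> (1 - c / 2) * (1 + c)"
      using assms mult_nonneg_nonneg[of c "1 - c"] by (simp add: algebra_simps)
    then show ?thesis using assms by (simp add: divide_le_eq)
  qed
  finally show ?thesis .
qed

lemma decreasing_below_le:
  fixes q :: "nat \<Rightarrow> 'a::order"
  assumes "\<And>i. Suc i < n \<Longrightarrow> q (Suc i) < q i" "i \<le> j" "j < n"
  shows "q j \<le> q i"
  using assms(2,3)
proof (induction j rule: dec_induct)
  case (step k)
  then show ?case using assms(1)[of k] by simp
qed simp

lemma expectation_bind_pmf_le: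
  fixes f :: "'b \<Rightarrow> real"
  assumes le: "\<And>\<nu>. \<nu> \<in> set_pmf \<mu> \<Longrightarrow> measure_pmf.expectation (N \<nu>) f \<le> c"
    and bounded: "\<And>y. y \<in> set_pmf (bind_pmf \<mu> N) \<Longrightarrow> \<bar>f y\<bar> \<le> B"
  shows "measure_pmf.expectation (bind_pmf \<mu> N) f \<le> c"
proof -
  \<comment> \<open>\<open>f\<close> is bounded only on the support, so integrate its truncation \<open>g\<close> instead.\<close>
  define g where "g y = max (- B) (min B (f y))" for y
  obtain y0 where "y0 \<in> set_pmf (bind_pmf \<mu> N)"
    using set_pmf_not_empty[of "bind_pmf \<mu> N"] by blast
  then have "0 \<le> B"
    using bounded by (meson abs_ge_zero order.trans)
  then have g_bounded: "\<bar>g y\<bar> \<le> B" for y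
    unfolding g_def by auto
  have g_eq: "g y = f y" if "y \<in> set_pmf (bind_pmf \<mu> N)" for y
    using bounded[OF that] unfolding g_def by auto
  have g_integrable: "integrable (measure_pmf M) g" for M
    using g_bounded by (intro measure_pmf.integrable_const_bound[where B = B]) auto
  have "measure_pmf.expectation (bind_pmf \<mu> N) f = measure_pmf.expectation (bind_pmf \<mu> N) g"
    by (intro integral_cong_AE) (auto simp: AE_measure_pmf_iff g_eq)
  also have "\<dots> = \<integral>\<nu>. measure_pmf.expectation (N \<nu>) g \<partial>measure_pmf \<mu>"
    unfolding measure_pmf_bind
    by (rule integral_bind[where K = "count_space UNIV" and B = B and B' = 1])
       (auto simp: g_bounded measurable_measure_pmf space_subprob_algebra
         subprob_space_measure_pmf measure_pmf.emeasure_space_1)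
  also have "\<dots> \<le> c"
  proof (rule measure_pmf.integral_le_const)
    have "norm (measure_pmf.expectation (N \<nu>) g) \<le> B" for \<nu>
    proof -
      have "norm (measure_pmf.expectation (N \<nu>) g) \<le> (\<integral>y. norm (g y) \<partial>N \<nu>)"
        by (rule integral_norm_bound)
      also have "\<dots> \<le> B"
        using g_bounded g_integrable by (intro measure_pmf.integral_le_const) auto
      finally show ?thesis .
    qed
    then show "integrable (measure_pmf \<mu>) (\<lambda>\<nu>. measure_pmf.expectation (N \<nu>) g)"
      by (intro measure_pmf.integrable_const_bound[where B = B]) auto
    have "measure_pmf.expectation (N \<nu>) g = measure_pmf.expectation (N \<nu>) f"
      if "\<nu> \<in> set_pmf \<mu>" for \<nu>
      using that by (intro integral_cong_AE) (auto simp: AE_measure_pmf_iff intro!: g_eq)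
    then show "AE \<nu> in measure_pmf \<mu>. measure_pmf.expectation (N \<nu>) g \<le> c"
      using le by (simp add: AE_measure_pmf_iff)
  qed
  finally show ?thesis .
qed

lemma expectation_pair_Pi_pmf_component:
  fixes f :: "'b \<Rightarrow> real"
  assumes "finite A" "i \<in> A"
  shows "measure_pmf.expectation (pair_pmf (Pi_pmf A dflt P) Q) (\<lambda>z. f (fst z i))
    = measure_pmf.expectation (P i) f"
proof -
  have "measure_pmf.expectation (pair_pmf (Pi_pmf A dflt P) Q) (\<lambda>z. f (fst z i))
      = measure_pmf.expectation (map_pmf (\<lambda>D. D i) (Pi_pmf A dflt P)) f"
    using expectation_pair_pmf_fst[of "Pi_pmf A dflt P" Q "\<lambda>D. f (D i)"] by simp
  then show ?thesis
    using assms by (simp add: Pi_pmf_component)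
qed

lemma set_dep_pmf_subset:
  assumes "0 \<le> qi" "qi \<le> 1"
  shows "set_pmf (dep_pmf qi x) \<subseteq> {..x}"
  using assms by (auto simp: dep_pmf_def set_pmf_binomial_eq divide_le_eq_1)

lemma set_departures_pmf:
  fixes I :: nat
  assumes "\<And>i. i < I \<Longrightarrow> 0 \<le> q i \<and> q i \<le> 1"
  shows "set_pmf (Pi_pmf {..<I} 0 (\<lambda>i. dep_pmf (q i) (x i))) \<subseteq> PiE_dflt {..<I} 0 (\<lambda>i. {..x i})"
proof -
  have "set_pmf (dep_pmf (q i) (x i)) \<subseteq> {..x i}" if "i < I" for i
    using assms[OF that] by (intro set_dep_pmf_subset) auto
  moreover have "set_pmf (Pi_pmf {..<I} 0 (\<lambda>i. dep_pmf (q i) (x i)))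
      \<subseteq> PiE_dflt {..<I} 0 (\<lambda>i. set_pmf (dep_pmf (q i) (x i)))"
    using set_Pi_pmf_subset'[of "{..<I}" 0 "\<lambda>i. dep_pmf (q i) (x i)"] by (simp add: o_def)
  ultimately show ?thesis
    by (fastforce simp: PiE_dflt_def)
qed

lemma finite_set_departures_pmf:
  fixes I :: nat
  assumes "\<And>i. i < I \<Longrightarrow> 0 \<le> q i \<and> q i \<le> 1"
  shows "finite (set_pmf (Pi_pmf {..<I} 0 (\<lambda>i. dep_pmf (q i) (x i))))"
proof (rule finite_subset[OF set_departures_pmf])
  show "finite (PiE_dflt {..<I} 0 (\<lambda>i. {..x i}))"
    by (intro finite_PiE_dflt) auto
qed (use assms in auto)

lemma set_departures_pmf_le:
  fixes I :: nat
  assumes "\<And>i. i < I \<Longrightarrow> 0 \<le> q i \<and> q i \<le> 1"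
    and "D \<in> set_pmf (Pi_pmf {..<I} 0 (\<lambda>i. dep_pmf (q i) (x i)))" "i < I"
  shows "D i \<le> x i"
  using set_departures_pmf[of I q x] assms by (auto simp: PiE_dflt_def)

lemma expectation_dep_pmf_nonzero_ge:
  assumes "0 \<le> qi" "qi \<le> 1" "x \<noteq> 0"
  shows "qi / 2 \<le> measure_pmf.expectation (dep_pmf qi x) (\<lambda>d. of_bool (d \<noteq> 0))"
proof -
  have "(1 - qi / real x) ^ x \<le> exp (- qi)"
    using assms by (intro exp_ge_one_minus_x_over_n_power_n) auto
  also have "\<dots> \<le> 1 - qi / 2"
    using assms by (intro exp_minus_le_one_minus_half)
  finally have "qi / 2 \<le> 1 - pmf (dep_pmf qi x) 0"
    using assms by (simp add: dep_pmf_def pmf_binomial divide_le_eq_1)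
  also have "1 - pmf (dep_pmf qi x) 0 = measure_pmf.prob (dep_pmf qi x) (- {0})"
    using measure_pmf.prob_compl[of "{0}" "dep_pmf qi x"] by (simp add: measure_pmf_single Compl_eq_Diff_UNIV)
  also have "\<dots> = measure_pmf.expectation (dep_pmf qi x) (\<lambda>d. of_bool (d \<noteq> 0))"
  proof -
    have "(\<lambda>d::nat. of_bool (d \<noteq> 0) :: real) = indicator (- {0})"
      by (auto simp: fun_eq_iff)
    then show ?thesis by simp
  qed
  finally show ?thesis .
qed

lemma exp_increment_le:
  fixes a :: real and x d w :: nat
  assumes "d \<le> x" "w \<le> 1" "0 < a"
  shows "exp (a * real (x - d + w)) - exp (a * real x)
    \<le> exp (a * real x) * (real w * (exp a - 1) - of_bool (d \<noteq> 0) * (1 - exp (- a)))"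
proof -
  have split: "exp (a * real (x - d + w)) = exp (a * real x) * (exp (- (a * real d)) * exp (a * real w))"
    using assms(1) by (simp add: of_nat_diff algebra_simps flip: exp_add)
  have arrival: "exp (a * real w) = 1 + real w * (exp a - 1)"
    using assms(2) by (cases w) auto
  have departure: "exp (- (a * real d)) \<le> 1 - of_bool (d \<noteq> 0) * (1 - exp (- a))"
    using assms(3) by (cases "d = 0") (auto simp: mult_le_cancel_left1)
  have "exp (- (a * real d)) * exp (a * real w)
      \<le> (1 - of_bool (d \<noteq> 0) * (1 - exp (- a))) * (1 + real w * (exp a - 1))"
    unfolding arrival by (intro mult_right_mono departure) (use assms(3) in auto)
  also have "\<dots> = 1 + real w * (exp a - 1) - of_bool (d \<noteq> 0) * (1 - exp (- a))
      - (of_bool (d \<noteq> 0) * (1 - exp (- a))) * (real w * (exp a - 1))"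
    by (simp add: algebra_simps)
  also have "\<dots> \<le> 1 + real w * (exp a - 1) - of_bool (d \<noteq> 0) * (1 - exp (- a))"
    using assms(3) by simp
  finally have "exp (a * real x) * (exp (- (a * real d)) * exp (a * real w))
      \<le> exp (a * real x) * (1 + real w * (exp a - 1) - of_bool (d \<noteq> 0) * (1 - exp (- a)))"
    by (rule mult_left_mono) simp
  then show ?thesis
    unfolding split by (simp add: algebra_simps)
qed

lemma expectation_next_pmf_Phi_diff_le:
  assumes "0 < a" "0 \<le> p" "p \<le> 1" and q: "\<And>i. i < I \<Longrightarrow> 0 \<le> q i \<and> q i \<le> 1"
    and \<nu>: "valid_control I \<nu>"
  shows "measure_pmf.expectation (next_pmf p q I x \<nu>) (\<lambda>y. Phi a I y - Phi a I x)
    \<le> (\<Sum>i<I. exp (a * real (x i)) * (real (\<nu> i) * p * (exp a - 1)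
         - measure_pmf.expectation (dep_pmf (q i) (x i)) (\<lambda>d. of_bool (d \<noteq> 0)) * (1 - exp (- a))))"
proof -
  define A where "A = Pi_pmf {..<I} 0 (\<lambda>i. dep_pmf (q i) (x i))"
  define M where "M = pair_pmf A (bernoulli_pmf p)"
  define arr where "arr i z = (if snd z then \<nu> i else 0)" for i and z :: "(nat \<Rightarrow> nat) \<times> bool"
  define h where "h i z = exp (a * real (x i)) * (real (arr i z) * (exp a - 1)
      - of_bool (fst z i \<noteq> 0) * (1 - exp (- a)))" for i z
  have integrable: "integrable (measure_pmf M) f" for f :: "_ \<Rightarrow> real"
    unfolding M_def A_def using finite_set_departures_pmf[of I q x] q
    by (intro integrable_measure_pmf_finite) simp
  have "measure_pmf.expectation (next_pmf p q I x \<nu>) (\<lambda>y. Phi a I y - Phi a I x)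
      = measure_pmf.expectation M (\<lambda>z. \<Sum>i<I. exp (a * real (x i - fst z i + arr i z)) - exp (a * real (x i)))"
    unfolding next_pmf_def M_def A_def arr_def Phi_def
    by (simp add: case_prod_beta sum_subtractf)
  also have "\<dots> \<le> measure_pmf.expectation M (\<lambda>z. \<Sum>i<I. h i z)"
  proof (intro integral_mono_AE integrable AE_pmfI sum_mono)
    fix z i assume z: "z \<in> set_pmf M" and i: "i \<in> {..<I}"
    then have "fst z i \<le> x i"
      using set_departures_pmf_le[of I q] q by (auto simp: M_def A_def)
    moreover have "arr i z \<le> 1"
      using \<nu> i by (auto simp: arr_def valid_control_def)
    ultimately show "exp (a * real (x i - fst z i + arr i z)) - exp (a * real (x i)) \<le> h i z"
      unfolding h_def using exp_increment_le assms(1) by blast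
  qed
  also have "\<dots> = (\<Sum>i<I. measure_pmf.expectation M (h i))"
    by (rule Bochner_Integration.integral_sum) (rule integrable)
  also have "\<dots> = (\<Sum>i<I. exp (a * real (x i)) * (real (\<nu> i) * p * (exp a - 1)
         - measure_pmf.expectation (dep_pmf (q i) (x i)) (\<lambda>d. of_bool (d \<noteq> 0)) * (1 - exp (- a))))"
  proof (rule sum.cong[OF refl])
    fix i assume i: "i \<in> {..<I}"
    have "measure_pmf.expectation M (\<lambda>z. real (arr i z)) = real (\<nu> i) * p"
      unfolding M_def arr_def using assms(2,3)
      by (simp add: expectation_pair_pmf_snd[where f = "\<lambda>b. real (if b then \<nu> i else 0)"])
    moreover have "measure_pmf.expectation M (\<lambda>z. of_bool (fst z i \<noteq> 0) :: real)
        = measure_pmf.expectation (dep_pmf (q i) (x i)) (\<lambda>d. of_bool (d \<noteq> 0))"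
      unfolding M_def A_def using i
      by (intro expectation_pair_Pi_pmf_component[where f = "\<lambda>d. of_bool (d \<noteq> 0)"]) auto
    ultimately show "measure_pmf.expectation M (h i) = exp (a * real (x i)) * (real (\<nu> i) * p * (exp a - 1)
         - measure_pmf.expectation (dep_pmf (q i) (x i)) (\<lambda>d. of_bool (d \<noteq> 0)) * (1 - exp (- a)))"
      unfolding h_def by (simp add: integrable algebra_simps)
  qed
  finally show ?thesis .
qed

definition busy_weight :: "real \<Rightarrow> nat \<Rightarrow> (nat \<Rightarrow> nat) \<Rightarrow> real" where
  "busy_weight a I x = (\<Sum>i | i < I \<and> x i \<noteq> 0. exp (a * real (x i)))"

lemma exp_le_busy_weight:
  assumes "0 \<le> a" "j < I" "x j \<noteq> 0" "i < I"
  shows "exp (a * real (x i)) \<le> busy_weight a I x"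
proof (cases "x i = 0")
  case True
  have "exp (a * real (x i)) \<le> exp (a * real (x j))"
    using True assms(1) by simp
  also have "\<dots> \<le> busy_weight a I x"
    unfolding busy_weight_def using assms(2,3) by (intro member_le_sum) auto
  finally show ?thesis .
next
  case False
  then show ?thesis
    unfolding busy_weight_def using assms(4) by (intro member_le_sum) auto
qed

lemma Phi_le_busy_weight:
  assumes "0 \<le> a" "j < I" "x j \<noteq> 0"
  shows "Phi a I x \<le> real I * busy_weight a I x"
proof -
  have "Phi a I x \<le> (\<Sum>i<I. busy_weight a I x)"
    unfolding Phi_def using exp_le_busy_weight[of a j I x] assms by (intro sum_mono) auto
  then show ?thesis by simp
qed

lemma next_pmf_drift_le:
  assumes "0 < a" "0 \<le> p" "p \<le> 1" "0 \<le> qmin"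
    and q: "\<And>i. i < I \<Longrightarrow> qmin \<le> q i \<and> q i \<le> 1"
    and \<nu>: "valid_control I \<nu>" and busy: "j < I" "x j \<noteq> 0"
  shows "measure_pmf.expectation (next_pmf p q I x \<nu>) (\<lambda>y. Phi a I y - Phi a I x)
    \<le> - (qmin / 2 * (1 - exp (- a)) - p * (exp a - 1)) * busy_weight a I x"
proof -
  define e where "e i = exp (a * real (x i))" for i
  define P :: "nat \<Rightarrow> real"
    where "P i = measure_pmf.expectation (dep_pmf (q i) (x i)) (\<lambda>d. of_bool (d \<noteq> 0))" for i
  define W where "W = busy_weight a I x"
  have arrivals: "(\<Sum>i<I. e i * real (\<nu> i)) \<le> W"
  proof -
    have "(\<Sum>i<I. e i * real (\<nu> i)) \<le> (\<Sum>i<I. W * real (\<nu> i))"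
      unfolding e_def W_def using exp_le_busy_weight[of a j I x] assms(1) busy
      by (intro sum_mono mult_right_mono) auto
    also have "\<dots> = W"
      using \<nu> by (simp add: valid_control_def flip: sum_distrib_left of_nat_sum)
    finally show ?thesis .
  qed
  have departures: "qmin / 2 * W \<le> (\<Sum>i<I. e i * P i)"
  proof -
    have "qmin / 2 * W = (\<Sum>i | i < I \<and> x i \<noteq> 0. e i * (qmin / 2))"
      unfolding W_def busy_weight_def e_def by (simp add: sum_distrib_left mult.commute)
    also have "\<dots> \<le> (\<Sum>i | i < I \<and> x i \<noteq> 0. e i * P i)"
    proof (intro sum_mono mult_left_mono)
      fix i assume "i \<in> {i. i < I \<and> x i \<noteq> 0}"
      then show "qmin / 2 \<le> P i"
        unfolding P_def using q[of i] assms(4)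
        by (intro order.trans[OF _ expectation_dep_pmf_nonzero_ge]) auto
    qed (simp add: e_def less_imp_le)
    also have "\<dots> \<le> (\<Sum>i<I. e i * P i)"
      unfolding P_def e_def by (intro sum_mono2) auto
    finally show ?thesis .
  qed
  have "measure_pmf.expectation (next_pmf p q I x \<nu>) (\<lambda>y. Phi a I y - Phi a I x)
      \<le> (\<Sum>i<I. e i * (real (\<nu> i) * p * (exp a - 1) - P i * (1 - exp (- a))))"
    unfolding e_def P_def using assms(1-3) q assms(4) \<nu>
    by (intro expectation_next_pmf_Phi_diff_le) (auto intro: order.trans)
  also have "\<dots> = p * (exp a - 1) * (\<Sum>i<I. e i * real (\<nu> i)) - (1 - exp (- a)) * (\<Sum>i<I. e i * P i)"
  proof -
    have "e i * (real (\<nu> i) * p * (exp a - 1) - P i * (1 - exp (- a)))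
        = p * (exp a - 1) * (e i * real (\<nu> i)) - (1 - exp (- a)) * (e i * P i)" for i
      by (simp add: algebra_simps)
    then show ?thesis by (simp add: sum_subtractf sum_distrib_left)
  qed
  also have "\<dots> \<le> p * (exp a - 1) * W - (1 - exp (- a)) * (qmin / 2 * W)"
    using arrivals departures assms(1,2)
    by (intro diff_mono mult_left_mono) auto
  finally show ?thesis
    unfolding W_def by (simp add: algebra_simps)
qed

lemma set_next_pmf_le:
  assumes "valid_control I \<nu>" "y \<in> set_pmf (next_pmf p q I x \<nu>)" "i < I"
  shows "y i \<le> x i + 1"
proof -
  have "\<nu> i \<le> 1"
    using assms(1,3) by (auto simp: valid_control_def)
  with assms(2,3) show ?thesis
    by (auto simp: next_pmf_def)
qed

lemma expectation_step_pmf_Phi_diff_le: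
  assumes "0 \<le> a" and valid: "\<And>\<nu>. \<nu> \<in> set_pmf \<mu> \<Longrightarrow> valid_control I \<nu>"
    and le: "\<And>\<nu>. \<nu> \<in> set_pmf \<mu> \<Longrightarrow>
      measure_pmf.expectation (next_pmf p q I x \<nu>) (\<lambda>y. Phi a I y - Phi a I x) \<le> c"
  shows "measure_pmf.expectation (step_pmf p q I x \<mu>) (\<lambda>y. Phi a I y - Phi a I x) \<le> c"
  unfolding step_pmf_def
proof (rule expectation_bind_pmf_le[where B = "Phi a I (\<lambda>i. x i + 1) + Phi a I x"])
  fix y assume "y \<in> set_pmf (bind_pmf \<mu> (next_pmf p q I x))"
  then obtain \<nu> where \<nu>: "\<nu> \<in> set_pmf \<mu>" and y: "y \<in> set_pmf (next_pmf p q I x \<nu>)"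
    by auto
  have "Phi a I y \<le> Phi a I (\<lambda>i. x i + 1)"
    unfolding Phi_def using set_next_pmf_le[OF valid[OF \<nu>] y] \<open>0 \<le> a\<close>
    by (intro sum_mono) (auto intro!: mult_left_mono simp del: of_nat_Suc)
  moreover have "0 \<le> Phi a I y" "0 \<le> Phi a I x"
    unfolding Phi_def by (auto intro: sum_nonneg)
  ultimately show "\<bar>Phi a I y - Phi a I x\<bar> \<le> Phi a I (\<lambda>i. x i + 1) + Phi a I x"
    by linarith
qed (rule le)

theorem lemma1:
  fixes p a :: real and q :: "nat \<Rightarrow> real" and I :: nat
  assumes "I \<ge> 1"
    and "0 < p" and "p < 1"
    and "q 0 < 1"
    and "\<And>i. Suc i < I \<Longrightarrow> q (Suc i) < q i"
    and "2 * p < q (I - 1)"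
    and "a > 0"
    and "p * (exp a - 1) < q (I - 1) / 2 * (1 - exp (- a))"
  shows "\<exists>b>0. \<forall>x :: nat \<Rightarrow> nat. \<forall>\<mu> :: (nat \<Rightarrow> nat) pmf.
           (\<exists>i<I. x i \<noteq> 0) \<longrightarrow> (\<forall>\<nu>\<in>set_pmf \<mu>. valid_control I \<nu>) \<longrightarrow>
           measure_pmf.expectation (step_pmf p q I x \<mu>) (\<lambda>y. Phi a I y - Phi a I x)
             \<le> - b * Phi a I x"
proof -
  have q: "q (I - 1) \<le> q i \<and> q i \<le> 1" if "i < I" for i
    using that assms(1,4,5) decreasing_below_le[of I q i "I - 1"]
      decreasing_below_le[of I q 0 i] by auto
  define \<epsilon> where "\<epsilon> = q (I - 1) / 2 * (1 - exp (- a)) - p * (exp a - 1)"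
  have "0 < \<epsilon>"
    using assms(8) unfolding \<epsilon>_def by simp
  show ?thesis
  proof (intro exI[of _ "\<epsilon> / real I"] conjI allI impI)
    show "0 < \<epsilon> / real I"
      using \<open>0 < \<epsilon>\<close> assms(1) by simp
    fix x :: "nat \<Rightarrow> nat" and \<mu> :: "(nat \<Rightarrow> nat) pmf"
    assume "\<exists>i<I. x i \<noteq> 0" and valid: "\<forall>\<nu>\<in>set_pmf \<mu>. valid_control I \<nu>"
    then obtain j where busy: "j < I" "x j \<noteq> 0"
      by blast
    have "measure_pmf.expectation (step_pmf p q I x \<mu>) (\<lambda>y. Phi a I y - Phi a I x)
        \<le> - \<epsilon> * busy_weight a I x"
      unfolding \<epsilon>_def using assms(2,3,6,7) q valid busy
      by (intro expectation_step_pmf_Phi_diff_le next_pmf_drift_le) auto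
    also have "\<dots> \<le> - (\<epsilon> / real I) * Phi a I x"
      using Phi_le_busy_weight[of a j I x] busy assms(1,7) \<open>0 < \<epsilon>\<close>
      by (simp add: field_simps)
    finally show "measure_pmf.expectation (step_pmf p q I x \<mu>) (\<lambda>y. Phi a I y - Phi a I x)
        \<le> - (\<epsilon> / real I) * Phi a I x" .
  qed
qed

end
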